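(* Let $\mathbb{F}$ be a field with $\mathrm{char}(\mathbb{F})\neq 2,3$, let $D\in\mathbb{N}$ and let $I$ be a minimal ideal of $\hat{\mathcal{H}}$ of axial codimension $D$. Then $\dim\hat{\mathcal{H}}/I\le D+\lfloor D/2\rfloor+2\lfloor D/6\rfloor$.
   Context: Notation: $\mathbb{N}=\{1,2,3,\dots\}$, $3\mathbb{N}=\{3,6,9,\dots\}$; for $r\in\mathbb{Z}$, $\bar r=r+3\mathbb{Z}\in\mathbb{Z}_3$. The algebra $\hat{\mathcal{H}}$ is the commutative $\mathbb{F}$-algebra with basis $\{a_i:i\in\mathbb{Z}\}\cup\{s_j:j\in\mathbb{N}\}\cup\{p_{\bar r,k}:\bar r\in\{\bar1,\bar2\},\ k\in 3\mathbb{N}\}$, where $s_0=0$, $p_{\bar r,j}=0$ for all $\bar r$ whenever $j\notin 3\mathbb{N}$, $p_{\bar 0,j}=-p_{\bar1,j}-p_{\bar2,j}$, $z_{\bar r,j}=p_{\bar r+\bar1,j}-p_{\bar r-\bar1,j}$, and for $i,i'\in\mathbb{Z}$, $j,l\in\mathbb{N}$, $h,k\in3\mathbb{N}$, $\bar r,\bar t\in\mathbb{Z}_3$: (H1) $a_ia_{i'}=\tfrac12(a_i+a_{i'})+s_{|i-i'|}+z_{\bar\imath,|i-i'|}$; (H2) $a_is_j=-\tfrac34a_i+\tfrac38(a_{i-j}+a_{i+j})+\tfrac32 s_j-z_{\bar\imath,j}$; (H3) $a_ip_{\bar r,k}=\tfrac32p_{\bar r,k}-p_{-(\bar\imath+\bar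 r),k}$; (H4) $s_js_l=\tfrac34(s_j+s_l)-\tfrac38(s_{|j-l|}+s_{j+l})$; (H5) $s_jp_{\bar r,k}=\tfrac34(p_{\bar r,j}+p_{\bar r,k})-\tfrac38(p_{\bar r,|j-k|}+p_{\bar r,j+k})$; (H6) $p_{\bar r,h}p_{\bar t,k}=\tfrac14(z_{-(\bar r+\bar t),h}+z_{-(\bar r+\bar t),k})-\tfrac18(z_{-(\bar r+\bar t),|h-k|}+z_{-(\bar r+\bar t),h+k})$. The axial codimension of an ideal $I$ is the dimension of the subspace of $\hat{\mathcal{H}}/I$ spanned by the images of the $a_i$. An ideal $I$ of axial codimension $D$ has pattern $(\alpha_0,\dots,\alpha_D)$ (where $\alpha_0\neq0\neq\alpha_D$) if $\sum_{i=0}^D\alpha_ia_i\in I$. A minimal ideal of axial codimension $D$ is an ideal of axial codimension $D$ which is minimal with respect to inclusion among the ideals of axial codimension $D$ having the same pattern. *)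

theory Defs
  imports Main
begin

text \<open>Basis indices, encoded so that every index is valid:
  \<open>HA i\<close> stands for \<open>a_i\<close> (\<open>i \<in> \<int>\<close>);
  \<open>HS n\<close> stands for \<open>s_(n+1)\<close> (so \<open>j = n+1 \<in> \<nat> = {1,2,...}\<close>);
  \<open>HP True m\<close> stands for \<open>p_(1bar, 3(m+1))\<close> and \<open>HP False m\<close> for \<open>p_(2bar, 3(m+1))\<close>.\<close>

datatype hidx = HA int | HS nat | HP bool nat

definition hsupp :: "(hidx \<Rightarrow> 'a::field) \<Rightarrow> hidx set" where
  "hsupp f = {u. f u \<noteq> 0}"

definition hcar :: "(hidx \<Rightarrow> 'a::field) set" where
  "hcar = {f. finite (hsupp f)}"

definition hbas :: "hidx \<Rightarrow> hidx \<Rightarrow> 'a::field" where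
  "hbas u = (\<lambda>v. if v = u then 1 else 0)"

definition hzero :: "hidx \<Rightarrow> 'a::field" where
  "hzero = (\<lambda>w. 0)"

definition ha :: "int \<Rightarrow> hidx \<Rightarrow> 'a::field" where
  "ha i = hbas (HA i)"

definition hs :: "nat \<Rightarrow> hidx \<Rightarrow> 'a::field" where
  "hs j = (if j = 0 then hzero else hbas (HS (j - 1)))"

definition hp :: "int \<Rightarrow> nat \<Rightarrow> hidx \<Rightarrow> 'a::field" where
  "hp r k = (if 0 < k \<and> 3 dvd k then
      (if r mod 3 = 1 then hbas (HP True (k div 3 - 1))
       else if r mod 3 = 2 then hbas (HP False (k div 3 - 1))
       else (\<lambda>w. - hbas (HP True (k div 3 - 1)) w - hbas (HP False (k div 3 - 1)) w))
    else hzero)"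

definition hz :: "int \<Rightarrow> nat \<Rightarrow> hidx \<Rightarrow> 'a::field" where
  "hz r j = (\<lambda>w. hp (r + 1) j w - hp (r - 1) j w)"

definition absdiff :: "nat \<Rightarrow> nat \<Rightarrow> nat" where
  "absdiff j l = (if l \<le> j then j - l else l - j)"

definition prep :: "bool \<Rightarrow> int" where
  "prep b = (if b then 1 else 2)"

text \<open>Products of basis elements, following (H1)--(H6) (and commutativity).\<close>
fun bmul :: "hidx \<Rightarrow> hidx \<Rightarrow> hidx \<Rightarrow> 'a::field" where
  "bmul (HA i) (HA i') = (\<lambda>w. 1/2 * (ha i w + ha i' w)
       + hs (nat \<bar>i - i'\<bar>) w + hz i (nat \<bar>i - i'\<bar>) w)"
| "bmul (HA i) (HS n) = (let j = n + 1 in (\<lambda>w. - (3/4) * ha i w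
       + 3/8 * (ha (i - int j) w + ha (i + int j) w) + 3/2 * hs j w - hz i j w))"
| "bmul (HS n) (HA i) = (let j = n + 1 in (\<lambda>w. - (3/4) * ha i w
       + 3/8 * (ha (i - int j) w + ha (i + int j) w) + 3/2 * hs j w - hz i j w))"
| "bmul (HA i) (HP b m) = (let r = prep b; k = 3 * (m + 1) in
       (\<lambda>w. 3/2 * hp r k w - hp (- (i + r)) k w))"
| "bmul (HP b m) (HA i) = (let r = prep b; k = 3 * (m + 1) in
       (\<lambda>w. 3/2 * hp r k w - hp (- (i + r)) k w))"
| "bmul (HS n) (HS n') = (let j = n + 1; l = n' + 1 in
       (\<lambda>w. 3/4 * (hs j w + hs l w) - 3/8 * (hs (absdiff j l) w + hs (j + l) w)))"
| "bmul (HS n) (HP b m) = (let j = n + 1; r = prep b; k = 3 * (m + 1) in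
       (\<lambda>w. 3/4 * (hp r j w + hp r k w) - 3/8 * (hp r (absdiff j k) w + hp r (j + k) w)))"
| "bmul (HP b m) (HS n) = (let j = n + 1; r = prep b; k = 3 * (m + 1) in
       (\<lambda>w. 3/4 * (hp r j w + hp r k w) - 3/8 * (hp r (absdiff j k) w + hp r (j + k) w)))"
| "bmul (HP b m) (HP b' m') = (let r = prep b; t = prep b'; h = 3 * (m + 1); k = 3 * (m' + 1) in
       (\<lambda>w. 1/4 * (hz (- (r + t)) h w + hz (- (r + t)) k w)
          - 1/8 * (hz (- (r + t)) (absdiff h k) w + hz (- (r + t)) (h + k) w)))"

definition hmul :: "(hidx \<Rightarrow> 'a::field) \<Rightarrow> (hidx \<Rightarrow> 'a) \<Rightarrow> hidx \<Rightarrow> 'a" where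
  "hmul x y = (\<lambda>w. \<Sum>u\<in>hsupp x. \<Sum>v\<in>hsupp y. x u * y v * bmul u v w)"

definition hideal :: "(hidx \<Rightarrow> 'a::field) set \<Rightarrow> bool" where
  "hideal I \<longleftrightarrow> I \<subseteq> hcar \<and> hzero \<in> I
     \<and> (\<forall>x\<in>I. \<forall>y\<in>I. (\<lambda>w. x w + y w) \<in> I)
     \<and> (\<forall>c. \<forall>x\<in>I. (\<lambda>w. c * x w) \<in> I)
     \<and> (\<forall>x\<in>hcar. \<forall>y\<in>I. hmul x y \<in> I)"

definition hspan :: "(hidx \<Rightarrow> 'a::field) set \<Rightarrow> (hidx \<Rightarrow> 'a) set" where
  "hspan S = {(\<lambda>w. \<Sum>v\<in>T. c v * v w) | T c. finite T \<and> T \<subseteq> S}"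

definition lcomb :: "(nat \<Rightarrow> 'a::field) \<Rightarrow> (hidx \<Rightarrow> 'a) list \<Rightarrow> hidx \<Rightarrow> 'a" where
  "lcomb c vs = (\<lambda>w. \<Sum>i<length vs. c i * (vs ! i) w)"

text \<open>\<open>qdim I S n\<close>: the subspace of \<open>H-hat/I\<close> spanned by the images of the elements of \<open>S\<close>
  has dimension \<open>n\<close>, i.e. it has a basis consisting of the images of \<open>n\<close> elements of
  \<open>span S\<close>.\<close>
definition qdim :: "(hidx \<Rightarrow> 'a::field) set \<Rightarrow> (hidx \<Rightarrow> 'a) set \<Rightarrow> nat \<Rightarrow> bool" where
  "qdim I S n \<longleftrightarrow> (\<exists>vs. length vs = n \<and> set vs \<subseteq> hspan S
     \<and> (\<forall>c. lcomb c vs \<in> I \<longrightarrow> (\<forall>i<n. c i = 0))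
     \<and> (\<forall>x\<in>S. \<exists>c. (\<lambda>w. x w - lcomb c vs w) \<in> I))"

definition axial_codim :: "(hidx \<Rightarrow> 'a::field) set \<Rightarrow> nat \<Rightarrow> bool" where
  "axial_codim I D \<longleftrightarrow> qdim I (range ha) D"

definition has_pattern :: "(hidx \<Rightarrow> 'a::field) set \<Rightarrow> nat \<Rightarrow> (nat \<Rightarrow> 'a) \<Rightarrow> bool" where
  "has_pattern I D \<alpha> \<longleftrightarrow> \<alpha> 0 \<noteq> 0 \<and> \<alpha> D \<noteq> 0
     \<and> (\<lambda>w. \<Sum>i\<le>D. \<alpha> i * ha (int i) w) \<in> I"

definition minimal_ideal :: "(hidx \<Rightarrow> 'a::field) set \<Rightarrow> nat \<Rightarrow> bool" where
  "minimal_ideal I D \<longleftrightarrow> hideal I \<and> axial_codim I D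
     \<and> (\<exists>\<alpha>. has_pattern I D \<alpha>
          \<and> (\<forall>J. hideal J \<and> axial_codim J D \<and> has_pattern J D \<alpha> \<and> J \<subseteq> I \<longrightarrow> J = I))"

end

theory Submission
  imports Defs
begin

(* Let u = sum_i alpha_i a_i be the pattern element in I.  Give a_i the level |i - 1| and
   s_j, p_(r,j) the level j; multiplication by a_1 does not raise levels.  Modulo I the
   algebra is spanned by a basis of its axial part (D elements) together with the s_j and
   p_(r,j) of level j <= D/2 (floor(D/2) + 2 floor(D/6) elements).  This is shown by induction
   on the level: for m > D/2, by (H1) the element a_m u - u/2 of I equals alpha_0 (s_m + z_(m,m))
   up to elements of level < m, because |m - i| < m for 0 < i <= D < 2m.  If 3 does not divide m,
   this is s_m.  Otherwise, multiplying once and twice by a_1 gives two more such congruences,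
   which together with the axes determine s_m, p_(1,m) and p_(2,m) as the characteristic is
   not 2 or 3. *)

lemma hsupp_hbas [simp]: "hsupp (hbas u :: hidx \<Rightarrow> 'a::field) = {u}"
  by (auto simp: hsupp_def hbas_def)

lemma hcar_iff: "x \<in> hcar \<longleftrightarrow> finite (hsupp x)"
  by (simp add: hcar_def)

lemma hcar_if_hsupp_subset: "finite B \<Longrightarrow> hsupp x \<subseteq> B \<Longrightarrow> x \<in> hcar"
  by (meson finite_subset hcar_iff)

lemma hcar_lincomb:
  fixes x y :: "hidx \<Rightarrow> 'a::field"
  assumes "x \<in> hcar" "y \<in> hcar"
  shows "(\<lambda>w. a * x w + b * y w) \<in> hcar"
proof -
  have "hsupp (\<lambda>w. a * x w + b * y w) \<subseteq> hsupp x \<union> hsupp y"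
    by (auto simp: hsupp_def)
  then show ?thesis
    using assms by (intro hcar_if_hsupp_subset) (auto simp: hcar_iff)
qed

lemma hcar_add [simp]: "x \<in> hcar \<Longrightarrow> y \<in> hcar \<Longrightarrow> (\<lambda>w. x w + y w) \<in> hcar"
  using hcar_lincomb[of x y 1 1] by simp

lemma hcar_diff [simp]: "x \<in> hcar \<Longrightarrow> y \<in> hcar \<Longrightarrow> (\<lambda>w. x w - y w) \<in> hcar"
  using hcar_lincomb[of x y 1 "-1"] by simp

lemma hcar_scale [simp]: "x \<in> hcar \<Longrightarrow> (\<lambda>w. a * x w) \<in> hcar"
  using hcar_lincomb[of x x a 0] by simp

lemma hcar_sum:
  fixes f :: "'b \<Rightarrow> hidx \<Rightarrow> 'a::field"
  assumes "finite A" "\<And>i. i \<in> A \<Longrightarrow> f i \<in> hcar"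
  shows "(\<lambda>w. \<Sum>i\<in>A. f i w) \<in> hcar"
proof -
  have "hsupp (\<lambda>w. \<Sum>i\<in>A. f i w) \<subseteq> (\<Union>i\<in>A. hsupp (f i))"
    by (auto simp: hsupp_def intro: ccontr)
  then show ?thesis
    using assms by (intro hcar_if_hsupp_subset) (auto simp: hcar_iff)
qed

lemma hcar_hbas [simp]: "hbas u \<in> hcar"
  by (simp add: hcar_iff)

lemma hzero_eq [simp]: "hzero = (\<lambda>w. 0)"
  by (simp add: hzero_def)

lemma hcar_zero [simp]: "(\<lambda>w. 0) \<in> hcar"
  by (simp add: hcar_iff hsupp_def)

lemma ha_in_hcar [simp]: "ha i \<in> hcar"
  by (simp add: ha_def)

lemma hs_in_hcar [simp]: "hs j \<in> hcar"
  by (simp add: hs_def)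

lemma hp_in_hcar [simp]: "hp r k \<in> hcar"
proof -
  have "(\<lambda>w. - x w - y w) \<in> hcar" if "x \<in> hcar" "y \<in> hcar" for x y :: "hidx \<Rightarrow> 'a"
    using hcar_lincomb[OF that, of "-1" "-1"] by simp
  then show ?thesis
    by (simp add: hp_def)
qed

lemma hz_in_hcar [simp]: "hz r k \<in> hcar"
  by (simp add: hz_def)

lemma hspan_subset_hcar: "S \<subseteq> hcar \<Longrightarrow> hspan S \<subseteq> hcar"
  by (auto simp: hspan_def intro!: hcar_sum)

lemma hmul_sum_superset_right:
  fixes y :: "hidx \<Rightarrow> 'a::field"
  assumes "finite V" "hsupp y \<subseteq> V"
  shows "hmul x y w = (\<Sum>u\<in>hsupp x. \<Sum>v\<in>V. x u * y v * bmul u v w)"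
  unfolding hmul_def using assms
  by (intro sum.cong refl sum.mono_neutral_left) (auto simp: hsupp_def)

lemma hmul_hbas_left: "hmul (hbas p) y w = (\<Sum>v\<in>hsupp y. y v * bmul p v w)"
  unfolding hmul_def by simp (simp add: hbas_def)

lemma hmul_hbas_hbas [simp]: "hmul (hbas p) (hbas v) = bmul p v"
  by (rule ext) (simp add: hmul_hbas_left, simp add: hbas_def)

lemma hmul_zero_right [simp]: "hmul x (\<lambda>w. 0) = (\<lambda>w. 0)"
  by (simp add: hmul_def hsupp_def)

lemma hmul_lincomb_right:
  fixes y z :: "hidx \<Rightarrow> 'a::field"
  assumes "y \<in> hcar" "z \<in> hcar"
  shows "hmul x (\<lambda>w. a * y w + b * z w) = (\<lambda>w. a * hmul x y w + b * hmul x z w)"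
proof
  fix w
  let ?V = "hsupp y \<union> hsupp z"
  have V: "finite ?V" using assms by (simp add: hcar_iff)
  have "hmul x (\<lambda>w. a * y w + b * z w) w
      = (\<Sum>u\<in>hsupp x. \<Sum>v\<in>?V. x u * (a * y v + b * z v) * bmul u v w)"
    using V by (rule hmul_sum_superset_right) (auto simp: hsupp_def)
  also have "\<dots> = a * (\<Sum>u\<in>hsupp x. \<Sum>v\<in>?V. x u * y v * bmul u v w)
      + b * (\<Sum>u\<in>hsupp x. \<Sum>v\<in>?V. x u * z v * bmul u v w)"
    by (simp add: sum.distrib sum_distrib_left algebra_simps)
  also have "\<dots> = a * hmul x y w + b * hmul x z w"
    using hmul_sum_superset_right[OF V, of y x w] hmul_sum_superset_right[OF V, of z x w] by simp
  finally show "hmul x (\<lambda>w. a * y w + b * z w) w = a * hmul x y w + b * hmul x z w" .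
qed

lemma hmul_add_right [simp]:
  "y \<in> hcar \<Longrightarrow> z \<in> hcar \<Longrightarrow> hmul x (\<lambda>w. y w + z w) = (\<lambda>w. hmul x y w + hmul x z w)"
  using hmul_lincomb_right[of y z x 1 1] by simp

lemma hmul_diff_right [simp]:
  "y \<in> hcar \<Longrightarrow> z \<in> hcar \<Longrightarrow> hmul x (\<lambda>w. y w - z w) = (\<lambda>w. hmul x y w - hmul x z w)"
  using hmul_lincomb_right[of y z x 1 "-1"] by simp

lemma hmul_scale_right [simp]:
  "y \<in> hcar \<Longrightarrow> hmul x (\<lambda>w. a * y w) = (\<lambda>w. a * hmul x y w)"
  using hmul_lincomb_right[of y y x a 0] by simp

lemma hmul_sum_right:
  fixes f :: "'b \<Rightarrow> hidx \<Rightarrow> 'a::field"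
  assumes "finite A" "\<And>i. i \<in> A \<Longrightarrow> f i \<in> hcar"
  shows "hmul x (\<lambda>w. \<Sum>i\<in>A. f i w) = (\<lambda>w. \<Sum>i\<in>A. hmul x (f i) w)"
  using assms by (induction A rule: finite_induct) (simp_all add: hcar_sum)

section \<open>Products with an axis\<close>

lemma hp_mod3_cong: "r mod 3 = r' mod 3 \<Longrightarrow> hp r k = hp r' k"
  by (simp add: hp_def)

lemma hp_mod3_eq_0: "r mod 3 = 0 \<Longrightarrow> hp r k = (\<lambda>w. - hp 1 k w - hp 2 k w)"
  by (simp add: hp_def hzero_def)

lemma hp_not_multiple_of_3: "\<not> (0 < k \<and> 3 dvd k) \<Longrightarrow> hp r k = hzero"
  unfolding hp_def by presburger

lemma hp_prep: "hp (prep b) (3 * Suc q) = hbas (HP b q)"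
  by (simp add: hp_def prep_def)

lemma hs_0 [simp]: "hs 0 = (\<lambda>w. 0)"
  by (simp add: hs_def)

lemma hp_0 [simp]: "hp r 0 = (\<lambda>w. 0)"
  by (simp add: hp_def)

lemma hz_1: "hz 1 k = (\<lambda>w. hp 1 k w + 2 * hp 2 k w :: 'a::field)"
  by (rule ext) (simp add: hz_def hp_mod3_eq_0)

lemma ha_mul_ha:
  "hmul (ha i) (ha i') = (\<lambda>w. 1/2 * (ha i w + ha i' w) + hs (nat \<bar>i - i'\<bar>) w + hz i (nat \<bar>i - i'\<bar>) w)"
  by (simp add: ha_def)

lemma ha_mul_hs:
  assumes "0 < j"
  shows "hmul (ha i) (hs j) = (\<lambda>w. - (3/4) * ha i w + 3/8 * (ha (i - int j) w + ha (i + int j) w)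
    + 3/2 * hs j w - hz i j w)"
  using assms by (simp add: ha_def hs_def Let_def)

lemma ha_mul_hp:
  assumes "r mod 3 \<noteq> 0"
  shows "hmul (ha i) (hp r k) = (\<lambda>w. 3/2 * hp r k w - hp (- (i + r)) k w :: 'a::field)"
proof (cases "0 < k \<and> 3 dvd k")
  case True
  define q where "q = k div 3 - 1"
  have k: "k = 3 * Suc q"
    using True by (auto simp: q_def)
  define b where "b = (r mod 3 = 1)"
  have r: "prep b mod 3 = r mod 3"
    using assms by (auto simp: b_def prep_def)
  then have ir: "- (i + prep b) mod 3 = - (i + r) mod 3"
    by (intro mod_minus_cong mod_add_cong refl)
  have "hmul (ha i) (hp r k) = hmul (ha i) (hbas (HP b q))"
    by (simp add: k flip: hp_prep hp_mod3_cong[OF r])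
  also have "\<dots> = (\<lambda>w. 3/2 * hp (prep b) k w - hp (- (i + prep b)) k w)"
    by (simp add: k ha_def Let_def)
  finally show ?thesis
    unfolding hp_mod3_cong[OF r] hp_mod3_cong[OF ir] .
next
  case False
  then show ?thesis
    by (simp add: hp_not_multiple_of_3 ha_def)
qed

text \<open>By (H1), \<open>a\<^sub>m a\<^sub>0 = (a\<^sub>m + a\<^sub>0)/2 + sz m\<close>.\<close>
definition sz :: "nat \<Rightarrow> hidx \<Rightarrow> 'a::field" where
  "sz m = (\<lambda>w. hs m w + hz (int m) m w)"

lemma sz_not_multiple_of_3: "\<not> 3 dvd m \<Longrightarrow> sz m = hs m"
  by (simp add: sz_def hz_def hp_not_multiple_of_3)

lemma sz_multiple_of_3:
  assumes "m = 3 * Suc q"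
  shows "sz m = (\<lambda>w. hs m w + hp 1 m w - hp 2 m w)"
proof -
  have "(int m + 1) mod 3 = 1"
    unfolding assms by presburger
  moreover have "(int m - 1) mod 3 = 2"
    unfolding assms by presburger
  ultimately show ?thesis
    by (intro ext) (simp add: sz_def hz_def hp_mod3_cong[of "int m + 1" 1] hp_mod3_cong[of "int m - 1" 2])
qed

lemma numeral_Bit0_neq_0:
  assumes "(2::'a::field) \<noteq> 0" "(numeral n :: 'a) \<noteq> 0"
  shows "(numeral (Num.Bit0 n) :: 'a) \<noteq> 0"
proof -
  have "(numeral (Num.Bit0 n) :: 'a) = 2 * numeral n"
    by (metis mult_2 numeral_Bit0)
  then show ?thesis
    using no_zero_divisors[OF assms] by simp
qed

lemma ha1_mul_hp1:
  assumes "(2::'a::field) \<noteq> 0"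
  shows "hmul (ha 1) (hp 1 k) = (\<lambda>w. 1/2 * hp 1 k w :: 'a)"
  using assms by (simp add: ha_mul_hp hp_mod3_cong[of "- 2" 1]) (intro ext, simp add: field_simps)

lemma ha1_mul_hp2:
  assumes "(2::'a::field) \<noteq> 0"
  shows "hmul (ha 1) (hp 2 k) = (\<lambda>w. hp 1 k w + 5/2 * hp 2 k w :: 'a)"
  using assms by (simp add: ha_mul_hp hp_mod3_eq_0) (intro ext, simp add: field_simps)

lemma ha1_mul_sz:
  assumes "(2::'a::field) \<noteq> 0" "m = 3 * Suc q"
  shows "hmul (ha 1) (sz m) = (\<lambda>w. - (3/4) * ha 1 w + 3/8 * (ha (1 - int m) w + ha (1 + int m) w)
    + 3/2 * hs m w - 3/2 * hp 1 m w - 9/2 * hp 2 m w :: 'a)"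
  using assms
  by (simp add: sz_multiple_of_3 ha_mul_hs hz_1 ha1_mul_hp1 ha1_mul_hp2)
    (intro ext, simp add: field_simps numeral_Bit0_neq_0[OF assms(1)])

lemma ha1_mul_ha1_mul_sz:
  assumes "(2::'a::field) \<noteq> 0" "m = 3 * Suc q"
  shows "hmul (ha 1) (hmul (ha 1) (sz m)) = (\<lambda>w. - (3/2) * ha 1 w
    + 3/4 * (ha (1 - int m) w + ha (1 + int m) w) + 3 * hs m w - 6 * hp 1 m w - 51/4 * hp 2 m w :: 'a)"
proof -
  have "0 < m"
    using assms(2) by simp
  then show ?thesis
    using assms(1)
    \<comment> \<open>keep the coefficients in the form \<open>c * f w\<close> matched by the linearity rules\<close>
    by (simp add: ha1_mul_sz[OF assms] ha_mul_ha ha_mul_hs hz_1 ha1_mul_hp1 ha1_mul_hp2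
        del: times_divide_eq_left times_divide_eq_right)
      (intro ext, simp add: field_simps numeral_Bit0_neq_0[OF assms(1)])
qed

section \<open>Levels\<close>

fun level :: "hidx \<Rightarrow> nat" where
  "level (HA i) = nat \<bar>i - 1\<bar>"
| "level (HS n) = Suc n"
| "level (HP b n) = 3 * Suc n"

lemma finite_level_less: "finite {v. level v < m}"
proof -
  have "{v. level v < m} \<subseteq> HA ` {1 - int m..1 + int m} \<union> HS ` {..<m} \<union> case_prod HP ` (UNIV \<times> {..<m})"
  proof
    fix v
    assume "v \<in> {v. level v < m}"
    then show "v \<in> HA ` {1 - int m..1 + int m} \<union> HS ` {..<m} \<union> case_prod HP ` (UNIV \<times> {..<m})"
      by (cases v) (auto simp: image_iff)
  qed
  then show ?thesis
    by (rule finite_subset) auto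
qed

lemma ha_eq_0: "level w \<noteq> nat \<bar>i - 1\<bar> \<Longrightarrow> ha i w = 0"
  by (auto simp: ha_def hbas_def)

lemma hs_eq_0: "level w \<noteq> j \<Longrightarrow> hs j w = 0"
  by (auto simp: hs_def hbas_def)

lemma hp_eq_0: "level w \<noteq> k \<Longrightarrow> hp r k w = 0"
  by (cases w) (auto simp: hp_def hbas_def)

lemma hz_eq_0: "level w \<noteq> k \<Longrightarrow> hz r k w = 0"
  by (simp add: hz_def hp_eq_0)

lemma bmul_ha1_level: "level v < level w \<Longrightarrow> bmul (HA 1) v w = 0"
  by (cases v) (auto simp: Let_def ha_eq_0 hs_eq_0 hp_eq_0 hz_eq_0)

lemma hmul_ha1_level:
  assumes "hsupp x \<subseteq> {v. level v < m}"
  shows "hsupp (hmul (ha 1) x) \<subseteq> {v. level v < m}"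
proof
  fix w
  assume "w \<in> hsupp (hmul (ha 1) x)"
  then have "(\<Sum>v\<in>hsupp x. x v * bmul (HA 1) v w) \<noteq> 0"
    by (simp add: hsupp_def ha_def hmul_hbas_left)
  then obtain v where "v \<in> hsupp x" "x v * bmul (HA 1) v w \<noteq> 0"
    by (rule sum.not_neutral_contains_not_neutral)
  then show "w \<in> {v. level v < m}"
    using assms bmul_ha1_level[of v w] by (force simp: hsupp_def)
qed

section \<open>Spans modulo an ideal\<close>

context
  fixes I :: "(hidx \<Rightarrow> 'a::field) set"
  assumes I: "hideal I"
begin

lemma hideal_subset_hcar: "I \<subseteq> hcar"
  using I by (simp add: hideal_def)

lemma hideal_zero: "(\<lambda>w. 0) \<in> I"
  using I by (simp add: hideal_def)

lemma hideal_lincomb: "x \<in> I \<Longrightarrow> y \<in> I \<Longrightarrow> (\<lambda>w. a * x w + b * y w) \<in> I"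
  using I by (simp add: hideal_def)

lemma hideal_diff: "x \<in> I \<Longrightarrow> y \<in> I \<Longrightarrow> (\<lambda>w. x w - y w) \<in> I"
  using hideal_lincomb[of x y 1 "-1"] by simp

lemma hideal_scale: "x \<in> I \<Longrightarrow> (\<lambda>w. a * x w) \<in> I"
  using hideal_lincomb[of x x a 0] by simp

lemma hideal_mul: "x \<in> hcar \<Longrightarrow> y \<in> I \<Longrightarrow> hmul x y \<in> I"
  using I by (simp add: hideal_def)

end

definition span_mod :: "(hidx \<Rightarrow> 'a::field) set \<Rightarrow> (hidx \<Rightarrow> 'a) set \<Rightarrow> (hidx \<Rightarrow> 'a) set" where
  "span_mod I F = {x. \<exists>c. (\<lambda>w. x w - (\<Sum>v\<in>F. c v * v w)) \<in> I}"

context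
  fixes I :: "(hidx \<Rightarrow> 'a::field) set" and F :: "(hidx \<Rightarrow> 'a) set"
  assumes I: "hideal I" and F: "finite F"
begin

lemma span_mod_lincomb:
  assumes "x \<in> span_mod I F" "y \<in> span_mod I F"
  shows "(\<lambda>w. a * x w + b * y w) \<in> span_mod I F"
proof -
  obtain c d where
    c: "(\<lambda>w. x w - (\<Sum>v\<in>F. c v * v w)) \<in> I" and d: "(\<lambda>w. y w - (\<Sum>v\<in>F. d v * v w)) \<in> I"
    using assms by (auto simp: span_mod_def)
  have "(\<lambda>w. a * (x w - (\<Sum>v\<in>F. c v * v w)) + b * (y w - (\<Sum>v\<in>F. d v * v w)))
      = (\<lambda>w. (a * x w + b * y w) - (\<Sum>v\<in>F. (a * c v + b * d v) * v w))"
    by (simp add: algebra_simps sum.distrib sum_distrib_left)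
  then show ?thesis
    using hideal_lincomb[OF I c d, of a b] unfolding span_mod_def by auto
qed

lemma span_mod_add: "x \<in> span_mod I F \<Longrightarrow> y \<in> span_mod I F \<Longrightarrow> (\<lambda>w. x w + y w) \<in> span_mod I F"
  using span_mod_lincomb[of x y 1 1] by simp

lemma span_mod_diff: "x \<in> span_mod I F \<Longrightarrow> y \<in> span_mod I F \<Longrightarrow> (\<lambda>w. x w - y w) \<in> span_mod I F"
  using span_mod_lincomb[of x y 1 "-1"] by simp

lemma span_mod_scale: "x \<in> span_mod I F \<Longrightarrow> (\<lambda>w. a * x w) \<in> span_mod I F"
  using span_mod_lincomb[of x x a 0] by simp

lemma hideal_subset_span_mod: "I \<subseteq> span_mod I F"
  by (auto simp: span_mod_def intro: exI[of _ "\<lambda>v. 0"])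

lemma span_mod_generator:
  assumes "u \<in> F"
  shows "u \<in> span_mod I F"
proof -
  have "(\<lambda>w. u w - (\<Sum>v\<in>F. (if v = u then 1 else 0) * v w)) = (\<lambda>w. 0)"
    using assms F by (simp add: if_distrib[of "\<lambda>x. x * _"] cong: if_cong)
  then show ?thesis
    using hideal_zero[OF I] unfolding span_mod_def by (auto intro!: exI[of _ "\<lambda>v. if v = u then 1 else 0"])
qed

lemma span_mod_sum:
  fixes f :: "'b \<Rightarrow> hidx \<Rightarrow> 'a"
  assumes "finite A" "\<And>i. i \<in> A \<Longrightarrow> f i \<in> span_mod I F"
  shows "(\<lambda>w. \<Sum>i\<in>A. f i w) \<in> span_mod I F"
  using assms
proof (induction A rule: finite_induct)
  case empty
  then show ?case
    using hideal_subset_span_mod hideal_zero[OF I] by auto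
next
  case (insert i A)
  then show ?case
    using span_mod_add[of "f i" "\<lambda>w. \<Sum>i\<in>A. f i w"] by simp
qed

lemma span_mod_if_diff_in_ideal:
  assumes "(\<lambda>w. x w - y w) \<in> I" "y \<in> span_mod I F"
  shows "x \<in> span_mod I F"
proof -
  have "(\<lambda>w. (x w - y w) + y w) \<in> span_mod I F"
    using assms hideal_subset_span_mod by (intro span_mod_add) auto
  then show ?thesis
    by simp
qed

lemma span_mod_if_hbas:
  assumes "x \<in> hcar" "\<And>v. x v \<noteq> 0 \<Longrightarrow> hbas v \<in> span_mod I F"
  shows "x \<in> span_mod I F"
proof -
  have "x = (\<lambda>w. \<Sum>v\<in>hsupp x. x v * hbas v w)"
    using assms(1) by (intro ext) (simp add: hbas_def hcar_iff hsupp_def if_distrib[of "\<lambda>t. _ * t"] cong: if_cong)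
  also have "\<dots> \<in> span_mod I F"
    using assms by (intro span_mod_sum span_mod_scale) (auto simp: hcar_iff hsupp_def)
  finally show ?thesis .
qed

end

lemma span_mod_mono:
  fixes I :: "(hidx \<Rightarrow> 'a::field) set"
  assumes I: "hideal I" and F: "finite F" "finite F'" "F \<subseteq> F'"
  shows "span_mod I F \<subseteq> span_mod I F'"
proof
  fix x
  assume "x \<in> span_mod I F"
  then obtain c where c: "(\<lambda>w. x w - (\<Sum>v\<in>F. c v * v w)) \<in> I"
    by (auto simp: span_mod_def)
  have "(\<lambda>w. \<Sum>v\<in>F. c v * v w) \<in> span_mod I F'"
    using F by (intro span_mod_sum[OF I F(2)] span_mod_scale[OF I F(2)] span_mod_generator[OF I F(2)]) auto
  then show "x \<in> span_mod I F'"
    by (rule span_mod_if_diff_in_ideal[OF I F(2) c])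
qed

definition independent_mod :: "(hidx \<Rightarrow> 'a::field) set \<Rightarrow> (hidx \<Rightarrow> 'a) set \<Rightarrow> bool" where
  "independent_mod I F \<longleftrightarrow> (\<forall>c. (\<lambda>w. \<Sum>v\<in>F. c v * v w) \<in> I \<longrightarrow> (\<forall>v\<in>F. c v = 0))"

lemma span_mod_remove_dependent:
  fixes I :: "(hidx \<Rightarrow> 'a::field) set"
  assumes I: "hideal I" and F: "finite F"
    and dependent: "(\<lambda>w. \<Sum>v\<in>F. c v * v w) \<in> I" "u \<in> F" "c u \<noteq> 0"
    and x: "x \<in> span_mod I F"
  shows "x \<in> span_mod I (F - {u})"
proof -
  obtain d where d: "(\<lambda>w. x w - (\<Sum>v\<in>F. d v * v w)) \<in> I"
    using x by (auto simp: span_mod_def)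
  define k where "k = d u / c u"
  have "(\<lambda>w. 1 * (x w - (\<Sum>v\<in>F. d v * v w)) + k * (\<Sum>v\<in>F. c v * v w))
      = (\<lambda>w. x w - (\<Sum>v\<in>F - {u}. (d v - k * c v) * v w))"
  proof
    fix w
    have "k * c u = d u"
      using dependent(3) by (simp add: k_def)
    then show "1 * (x w - (\<Sum>v\<in>F. d v * v w)) + k * (\<Sum>v\<in>F. c v * v w)
        = x w - (\<Sum>v\<in>F - {u}. (d v - k * c v) * v w)"
      using F dependent(2)
      by (simp add: sum.remove algebra_simps sum_subtractf sum_distrib_left)
  qed
  then show ?thesis
    using hideal_lincomb[OF I d dependent(1), of 1 k] by (auto simp: span_mod_def)
qed

lemma qdim_if_independent_spanning:
  fixes I :: "(hidx \<Rightarrow> 'a::field) set"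
  assumes F: "finite F" "F \<subseteq> hcar" and indep: "independent_mod I F" and span: "hcar \<subseteq> span_mod I F"
  shows "qdim I hcar (card F)"
proof -
  obtain vs where vs: "set vs = F" "distinct vs"
    using finite_distinct_list[OF F(1)] by blast
  have len: "length vs = card F"
    using vs distinct_card by fastforce
  have bij: "bij_betw ((!) vs) {..<length vs} F"
    using bij_betw_nth[OF vs(2) refl vs(1)[symmetric]] .
  have reindex: "(\<Sum>i<length vs. g (vs ! i)) = (\<Sum>v\<in>F. g v)" for g :: "_ \<Rightarrow> 'a"
    using sum.reindex_bij_betw[OF bij] .
  show ?thesis
    unfolding qdim_def
  proof (intro exI[of _ vs] conjI allI impI ballI)
    show "length vs = card F"
      by (rule len)
    show "set vs \<subseteq> hspan hcar"
      using vs(1) F(2) by (force simp: hspan_def intro!: exI[of _ "{_}"] exI[of _ "\<lambda>_. 1"])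
  next
    fix c i
    assume c: "lcomb c vs \<in> I" and i: "i < card F"
    define c' where "c' = (\<lambda>v. c (inv_into {..<length vs} ((!) vs) v))"
    have c': "c' (vs ! j) = c j" if "j < length vs" for j
      using bij that by (simp add: c'_def bij_betw_def inv_into_f_f)
    have "lcomb c vs = (\<lambda>w. \<Sum>v\<in>F. c' v * v w)"
      using reindex c' by (simp add: lcomb_def flip: reindex)
    then have "\<forall>v\<in>F. c' v = 0"
      using c indep by (simp add: independent_mod_def)
    then show "c i = 0"
      using c'[of i] i len vs(1) by auto
  next
    fix x :: "hidx \<Rightarrow> 'a"
    assume "x \<in> hcar"
    then obtain d where d: "(\<lambda>w. x w - (\<Sum>v\<in>F. d v * v w)) \<in> I"
      using span by (auto simp: span_mod_def)
    have "lcomb (\<lambda>j. d (vs ! j)) vs = (\<lambda>w. \<Sum>v\<in>F. d v * v w)"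
      unfolding lcomb_def using reindex[of "\<lambda>v. d v * v _"] by simp
    then show "\<exists>c. (\<lambda>w. x w - lcomb c vs w) \<in> I"
      using d by (intro exI[of _ "\<lambda>j. d (vs ! j)"]) simp
  qed
qed

lemma qdim_le_card_if_spanning:
  fixes I :: "(hidx \<Rightarrow> 'a::field) set"
  assumes I: "hideal I"
  shows "finite F \<Longrightarrow> F \<subseteq> hcar \<Longrightarrow> hcar \<subseteq> span_mod I F \<Longrightarrow> \<exists>n\<le>card F. qdim I hcar n"
proof (induction "card F" arbitrary: F rule: less_induct)
  case less
  show ?case
  proof (cases "independent_mod I F")
    case True
    then show ?thesis
      using qdim_if_independent_spanning less.prems by blast
  next
    case False
    then obtain c u where dependent: "(\<lambda>w. \<Sum>v\<in>F. c v * v w) \<in> I" "u \<in> F" "c u \<noteq> 0"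
      by (auto simp: independent_mod_def)
    have "hcar \<subseteq> span_mod I (F - {u})"
      using span_mod_remove_dependent[OF I less.prems(1) dependent] less.prems(3) by blast
    moreover have "card (F - {u}) < card F"
      using less.prems(1) dependent(2) by (rule card_Diff1_less)
    ultimately obtain n where "n \<le> card (F - {u})" "qdim I hcar n"
      using less.hyps[of "F - {u}"] less.prems by blast
    then show ?thesis
      using \<open>card (F - {u}) < card F\<close> by (intro exI[of _ n]) simp
  qed
qed

lemma axial_codim_spanning_set:
  fixes I :: "(hidx \<Rightarrow> 'a::field) set"
  assumes I: "hideal I" and D: "axial_codim I D"
  obtains V where "finite V" "card V \<le> D" "V \<subseteq> hcar" "\<And>j. ha j \<in> span_mod I V"
proof -
  obtain vs where vs: "length vs = D" "set vs \<subseteq> hspan (range ha)"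
      "\<forall>x\<in>range ha. \<exists>c. (\<lambda>w. x w - lcomb c vs w) \<in> I"
    using D unfolding axial_codim_def qdim_def by (elim exE conjE) (rule that)
  have "ha j \<in> span_mod I (set vs)" for j
  proof -
    obtain c where c: "(\<lambda>w. ha j w - lcomb c vs w) \<in> I"
      using vs(3) by blast
    have "lcomb c vs \<in> span_mod I (set vs)"
      unfolding lcomb_def by (intro span_mod_sum span_mod_scale span_mod_generator I) auto
    then show ?thesis
      using span_mod_if_diff_in_ideal[OF I _ c] by simp
  qed
  moreover have "card (set vs) \<le> D"
    using vs(1) card_length by metis
  moreover have "set vs \<subseteq> hcar"
    using vs(2) hspan_subset_hcar[of "range ha"] by (auto simp: image_subset_iff)
  ultimately show ?thesis
    using that[of "set vs"] by blast
qed

section \<open>Spanning the quotient\<close>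

definition ideal_plus_below :: "(hidx \<Rightarrow> 'a::field) set \<Rightarrow> nat \<Rightarrow> (hidx \<Rightarrow> 'a) set" where
  "ideal_plus_below I m = {x \<in> hcar. \<exists>y\<in>I. hsupp (\<lambda>w. x w - y w) \<subseteq> {v. level v < m}}"

lemma ideal_plus_below_ha1_mul:
  assumes I: "hideal I" and x: "x \<in> ideal_plus_below I m"
  shows "hmul (ha 1) x \<in> ideal_plus_below I m"
proof -
  obtain y where y: "y \<in> I" and xy: "hsupp (\<lambda>w. x w - y w) \<subseteq> {v. level v < m}"
    using x by (auto simp: ideal_plus_below_def)
  have hcar: "x \<in> hcar" "y \<in> hcar"
    using x y hideal_subset_hcar[OF I] by (auto simp: ideal_plus_below_def)
  have ha1y: "hmul (ha 1) y \<in> I"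
    using hideal_mul[OF I] y by simp
  have below: "hsupp (\<lambda>w. hmul (ha 1) x w - hmul (ha 1) y w) \<subseteq> {v. level v < m}"
    using hmul_ha1_level[OF xy] hcar by simp
  then have "(\<lambda>w. hmul (ha 1) x w - hmul (ha 1) y w) \<in> hcar"
    by (rule hcar_if_hsupp_subset[OF finite_level_less])
  then have "(\<lambda>w. hmul (ha 1) y w + (hmul (ha 1) x w - hmul (ha 1) y w)) \<in> hcar"
    using ha1y hideal_subset_hcar[OF I] by (intro hcar_add) auto
  then show ?thesis
    using ha1y below by (auto simp: ideal_plus_below_def)
qed

lemma ideal_plus_below_subset_span_mod:
  assumes I: "hideal I" and F: "finite F"
    and below: "\<And>v. level v < m \<Longrightarrow> hbas v \<in> span_mod I F"
  shows "ideal_plus_below I m \<subseteq> span_mod I F"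
proof
  fix x
  assume "x \<in> ideal_plus_below I m"
  then obtain y where x: "x \<in> hcar" and y: "y \<in> I" and xy: "hsupp (\<lambda>w. x w - y w) \<subseteq> {v. level v < m}"
    by (auto simp: ideal_plus_below_def)
  have "(\<lambda>w. x w - y w) \<in> span_mod I F"
  proof (rule span_mod_if_hbas[OF I F])
    show "(\<lambda>w. x w - y w) \<in> hcar"
      using x y hideal_subset_hcar[OF I] by auto
    show "hbas v \<in> span_mod I F" if "x v - y v \<noteq> 0" for v
      using that xy below by (auto simp: hsupp_def)
  qed
  then have "(\<lambda>w. y w + (x w - y w)) \<in> span_mod I F"
    using y hideal_subset_span_mod[OF I F] by (intro span_mod_add[OF I F]) auto
  then show "x \<in> span_mod I F"
    by simp
qed

lemma sz_in_ideal_plus_below: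
  assumes I: "hideal I"
    and pattern: "(\<lambda>w. \<Sum>i\<le>D. \<alpha> i * ha (int i) w) \<in> I" "\<alpha> 0 \<noteq> 0"
    and m: "0 < m" "D < 2 * m"
  shows "sz m \<in> ideal_plus_below I m"
proof -
  define u where "u = (\<lambda>w. \<Sum>i\<le>D. \<alpha> i * ha (int i) w)"
  define y where "y = (\<lambda>w. 1 / \<alpha> 0 * (hmul (ha (int m)) u w - 1/2 * u w))"
  have "y \<in> I"
    unfolding y_def using pattern(1)
    by (intro hideal_scale[OF I] hideal_diff[OF I] hideal_mul[OF I]) (simp_all add: u_def hideal_scale[OF I])
  have y_eq: "y w = 1 / \<alpha> 0 * (\<Sum>i\<le>D. \<alpha> i * (1/2 * ha (int m) w
      + hs (nat \<bar>int m - int i\<bar>) w + hz (int m) (nat \<bar>int m - int i\<bar>) w))" for w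
    by (simp add: y_def u_def hmul_sum_right ha_mul_ha sum_distrib_left sum_subtractf[symmetric] algebra_simps)
  have "sz m w = y w" if w: "m \<le> level w" for w
  proof -
    have "(\<Sum>i\<in>{..D} - {0}. \<alpha> i * (1/2 * ha (int m) w
        + hs (nat \<bar>int m - int i\<bar>) w + hz (int m) (nat \<bar>int m - int i\<bar>) w)) = 0"
    proof (intro sum.neutral ballI)
      fix i
      assume "i \<in> {..D} - {0}"
      then have "nat \<bar>int m - int i\<bar> \<noteq> level w"
        using w m by auto
      then show "\<alpha> i * (1/2 * ha (int m) w
          + hs (nat \<bar>int m - int i\<bar>) w + hz (int m) (nat \<bar>int m - int i\<bar>) w) = 0"
        using w m by (simp add: ha_eq_0 hs_eq_0 hz_eq_0)
    qed
    then show ?thesis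
      using w m pattern(2) by (simp add: y_eq sum.remove[of "{..D}" 0] ha_eq_0 sz_def)
  qed
  then have "hsupp (\<lambda>w. sz m w - y w) \<subseteq> {v. level v < m}"
    by (auto simp: hsupp_def not_less[symmetric])
  moreover have "sz m \<in> hcar"
    by (simp add: sz_def)
  ultimately show ?thesis
    using \<open>y \<in> I\<close> by (auto simp: ideal_plus_below_def)
qed

text \<open>Modulo the axes, \<open>sz m\<close>, \<open>a\<^sub>1 sz m\<close> and \<open>a\<^sub>1 (a\<^sub>1 sz m)\<close> have coordinates
  \<open>(1, 1, -1)\<close>, \<open>(3/2, -3/2, -9/2)\<close> and \<open>(3, -6, -51/4)\<close> with respect to
  \<open>(s\<^sub>m, p\<^sub>1\<^sub>,\<^sub>m, p\<^sub>2\<^sub>,\<^sub>m)\<close>; the determinant \<open>9/4\<close> is a unit in characteristic not 2 or 3.\<close>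
lemma span_mod_hs_hp_from_sz:
  fixes I :: "(hidx \<Rightarrow> 'a::field) set"
  assumes I: "hideal I" and F: "finite F" and two: "(2::'a) \<noteq> 0" and three: "(3::'a) \<noteq> 0"
    and m: "m = 3 * Suc q"
    and ha: "\<And>j. ha j \<in> span_mod I F"
    and sz: "sz m \<in> span_mod I F" "hmul (ha 1) (sz m) \<in> span_mod I F"
      "hmul (ha 1) (hmul (ha 1) (sz m)) \<in> span_mod I F"
  shows "hs m \<in> span_mod I F" "hp 1 m \<in> span_mod I F" "hp 2 m \<in> span_mod I F"
proof -
  note span = span_mod_add[OF I F] span_mod_diff[OF I F] span_mod_scale[OF I F]
  note nonzero = two three numeral_Bit0_neq_0[OF two]
  let ?E = "sz m" and ?E1 = "hmul (ha 1) (sz m)" and ?E2 = "hmul (ha 1) (hmul (ha 1) (sz m))"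
  have "(\<lambda>w. ha 1 w - 1/2 * (ha (1 - int m) w + ha (1 + int m) w)
      - 4/3 * (?E2 w - 3 * ?E1 w + 3/2 * ?E w)) \<in> span_mod I F"
    by (intro span ha sz)
  also have "(\<lambda>w. ha 1 w - 1/2 * (ha (1 - int m) w + ha (1 + int m) w)
      - 4/3 * (?E2 w - 3 * ?E1 w + 3/2 * ?E w)) = (hp 2 m :: hidx \<Rightarrow> 'a)"
    unfolding ha1_mul_ha1_mul_sz[OF two m]
    unfolding ha1_mul_sz[OF two m]
    unfolding sz_multiple_of_3[OF m]
    using nonzero by (intro ext) (simp add: field_simps)
  finally show hp2: "hp 2 m \<in> span_mod I F" .
  have "(\<lambda>w. - 1/4 * ha 1 w + 1/8 * (ha (1 - int m) w + ha (1 + int m) w)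
      - 1/3 * (?E1 w - 3/2 * ?E w) - hp 2 m w) \<in> span_mod I F"
    by (intro span ha sz hp2)
  also have "(\<lambda>w. - 1/4 * ha 1 w + 1/8 * (ha (1 - int m) w + ha (1 + int m) w)
      - 1/3 * (?E1 w - 3/2 * ?E w) - hp 2 m w) = (hp 1 m :: hidx \<Rightarrow> 'a)"
    unfolding ha1_mul_sz[OF two m]
    unfolding sz_multiple_of_3[OF m]
    using nonzero by (intro ext) (simp add: field_simps)
  finally show hp1: "hp 1 m \<in> span_mod I F" .
  have "(\<lambda>w. ?E w - hp 1 m w + hp 2 m w) \<in> span_mod I F"
    by (intro span sz hp1 hp2)
  then show "hs m \<in> span_mod I F"
    unfolding sz_multiple_of_3[OF m] by simp
qed

lemma span_mod_hbas_from_lower_levels: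
  fixes I :: "(hidx \<Rightarrow> 'a::field) set"
  assumes I: "hideal I" and F: "finite F" and two: "(2::'a) \<noteq> 0" and three: "(3::'a) \<noteq> 0"
    and ha: "\<And>j. ha j \<in> span_mod I F"
    and pattern: "(\<lambda>w. \<Sum>i\<le>D. \<alpha> i * ha (int i) w) \<in> I" "\<alpha> 0 \<noteq> 0"
    and v: "v \<notin> range HA" "D < 2 * level v"
    and below: "\<And>v'. level v' < level v \<Longrightarrow> hbas v' \<in> span_mod I F"
  shows "hbas v \<in> span_mod I F"
proof -
  define m where "m = level v"
  then have "0 < m"
    using v by (cases v) auto
  then have sz: "sz m \<in> ideal_plus_below I m"
    using sz_in_ideal_plus_below[OF I pattern] v by (simp add: m_def)
  have sub: "ideal_plus_below I m \<subseteq> span_mod I F"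
    using ideal_plus_below_subset_span_mod[OF I F] below by (simp add: m_def)
  show ?thesis
  proof (cases "3 dvd m")
    case False
    then have "v = HS (m - 1)"
      using v by (cases v) (auto simp: m_def)
    then have "hbas v = (sz m :: hidx \<Rightarrow> 'a)"
      using sz_not_multiple_of_3[OF False, where 'a='a] \<open>0 < m\<close> by (simp add: hs_def)
    then show ?thesis
      using sz sub by (simp add: subset_iff)
  next
    case True
    define q where "q = m div 3 - 1"
    have m: "m = 3 * Suc q"
      using True \<open>0 < m\<close> by (auto simp: q_def)
    have sz1: "hmul (ha 1) (sz m) \<in> ideal_plus_below I m"
      by (rule ideal_plus_below_ha1_mul[OF I sz])
    have sz2: "hmul (ha 1) (hmul (ha 1) (sz m)) \<in> ideal_plus_below I m"
      by (rule ideal_plus_below_ha1_mul[OF I sz1])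
    note generators = span_mod_hs_hp_from_sz[OF I F two three m ha
        subsetD[OF sub sz] subsetD[OF sub sz1] subsetD[OF sub sz2]]
    moreover have "v = HS (m - 1) \<or> v = HP True q \<or> v = HP False q"
      using v m by (cases v) (auto simp: m_def)
    ultimately show ?thesis
      using m hp_prep[of True q, where 'a='a] hp_prep[of False q, where 'a='a]
      by (auto simp: hs_def prep_def)
  qed
qed

lemma hcar_subset_span_mod:
  fixes I :: "(hidx \<Rightarrow> 'a::field) set"
  assumes I: "hideal I" and F: "finite F" and two: "(2::'a) \<noteq> 0" and three: "(3::'a) \<noteq> 0"
    and ha: "\<And>j. ha j \<in> span_mod I F"
    and pattern: "(\<lambda>w. \<Sum>i\<le>D. \<alpha> i * ha (int i) w) \<in> I" "\<alpha> 0 \<noteq> 0"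
    and low: "\<And>v. v \<notin> range HA \<Longrightarrow> level v \<le> D div 2 \<Longrightarrow> hbas v \<in> F"
  shows "hcar \<subseteq> span_mod I F"
proof -
  have hbas: "hbas v \<in> span_mod I F" for v
  proof (induction "level v" arbitrary: v rule: less_induct)
    case less
    show ?case
    proof (cases "v \<in> range HA")
      case True
      then show ?thesis
        using ha by (auto simp: ha_def)
    next
      case False
      show ?thesis
      proof (cases "level v \<le> D div 2")
        case True
        then show ?thesis
          using False low span_mod_generator[OF I F] by blast
      next
        case False
        then have "D < 2 * level v"
          by linarith
        with \<open>v \<notin> range HA\<close> show ?thesis
          using less by (rule span_mod_hbas_from_lower_levels[OF I F two three ha pattern])
      qed
    qed
  qed
  show ?thesis
    using span_mod_if_hbas[OF I F] hbas by blast
qed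

lemma card_non_axis_level_atMost: "card {v. v \<notin> range HA \<and> level v \<le> n} = n + 2 * (n div 3)"
proof -
  have "{v. v \<notin> range HA \<and> level v \<le> n}
      = HS ` {..<n} \<union> (HP True ` {..<n div 3} \<union> HP False ` {..<n div 3})"
  proof (rule set_eqI)
    fix v
    show "v \<in> {v. v \<notin> range HA \<and> level v \<le> n}
        \<longleftrightarrow> v \<in> HS ` {..<n} \<union> (HP True ` {..<n div 3} \<union> HP False ` {..<n div 3})"
    proof (cases v)
      case (HP b k)
      have "level v \<le> n \<longleftrightarrow> k < n div 3"
        using HP by auto
      then show ?thesis
        using HP by (cases b) auto
    qed auto
  qed
  moreover have "card (HS ` {..<n} \<union> (HP True ` {..<n div 3} \<union> HP False ` {..<n div 3}))
      = n + (n div 3 + n div 3)"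
  proof -
    have "card (HS ` {..<n}) = n" "card (HP b ` {..<n div 3}) = n div 3" for b
      by (simp_all add: card_image inj_on_def)
    moreover have "HS ` {..<n} \<inter> (HP True ` {..<n div 3} \<union> HP False ` {..<n div 3}) = {}"
      "HP True ` {..<n div 3} \<inter> HP False ` {..<n div 3} = {}"
      by auto
    ultimately show ?thesis
      by (simp add: card_Un_disjoint)
  qed
  ultimately show ?thesis
    by simp
qed

lemma spanning_set_of_pattern:
  fixes I :: "(hidx \<Rightarrow> 'a::field) set"
  assumes I: "hideal I" and two: "(2::'a) \<noteq> 0" and three: "(3::'a) \<noteq> 0"
    and D: "axial_codim I D"
    and pattern: "(\<lambda>w. \<Sum>i\<le>D. \<alpha> i * ha (int i) w) \<in> I" "\<alpha> 0 \<noteq> 0"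
  obtains F where "finite F" "F \<subseteq> hcar" "card F \<le> D + D div 2 + 2 * (D div 6)"
    "hcar \<subseteq> span_mod I F"
proof -
  obtain V where V: "finite V" "card V \<le> D" "V \<subseteq> hcar" "\<And>j. ha j \<in> span_mod I V"
    using axial_codim_spanning_set[OF I D] by blast
  define L where "L = {v. v \<notin> range HA \<and> level v \<le> D div 2}"
  define F where "F = V \<union> hbas ` L"
  have "finite L"
    using finite_level_less[of "Suc (D div 2)"] by (rule finite_subset[rotated]) (auto simp: L_def)
  then have F: "finite F" "F \<subseteq> hcar"
    using V by (auto simp: F_def)
  have "card F \<le> card V + card (hbas ` L :: (hidx \<Rightarrow> 'a) set)"
    unfolding F_def by (rule card_Un_le)
  also have "\<dots> \<le> card V + card L"
    using card_image_le[OF \<open>finite L\<close>, of hbas] by simp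
  also have "\<dots> \<le> D + D div 2 + 2 * (D div 6)"
    using V(2) card_non_axis_level_atMost[of "D div 2"] div_mult2_eq[of D 2 3] by (simp add: L_def)
  finally have "card F \<le> D + D div 2 + 2 * (D div 6)" .
  moreover have "hcar \<subseteq> span_mod I F"
  proof (rule hcar_subset_span_mod[OF I F(1) two three _ pattern])
    show "ha j \<in> span_mod I F" for j
      using V(4) span_mod_mono[OF I V(1) F(1)] by (auto simp: F_def)
    show "hbas v \<in> F" if "v \<notin> range HA" "level v \<le> D div 2" for v
      using that by (auto simp: F_def L_def)
  qed
  ultimately show ?thesis
    using that F by blast
qed

theorem corollary9p7:
  fixes I :: "(hidx \<Rightarrow> 'a::field) set" and D :: nat
  assumes "(2::'a) \<noteq> 0" and "(3::'a) \<noteq> 0"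
    and "1 \<le> D"
    and "minimal_ideal I D"
  shows "\<exists>n \<le> D + D div 2 + 2 * (D div 6). qdim I hcar n"
proof -
  obtain \<alpha> where I: "hideal I" and D: "axial_codim I D" and \<alpha>: "has_pattern I D \<alpha>"
    using assms(4) by (auto simp: minimal_ideal_def)
  then obtain F where F: "finite F" "F \<subseteq> hcar" "card F \<le> D + D div 2 + 2 * (D div 6)"
      "hcar \<subseteq> span_mod I F"
    using spanning_set_of_pattern[OF I assms(1,2) D] by (auto simp: has_pattern_def)
  then obtain n where "n \<le> card F" "qdim I hcar n"
    using qdim_le_card_if_spanning[OF I] by blast
  then show ?thesis
    using F(3) by (intro exI[of _ n]) simp
qed

end
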